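(* Let $G$ be a finite abelian group and $\{a,b\}$ a $2$-element generating set of $G$ with $a$ and $b$ nontrivial. If the subgroup $\langle a-b\rangle$ has even index in $G$, then $\mathrm{Cay}(G;a,b)$ has two arc-disjoint hamiltonian paths.
   Context: For an abelian group $G$ and $a,b\in G$, the Cayley digraph $\mathrm{Cay}(G;a,b)$ has vertex set $G$ and an arc from $v$ to $v+s$ for every $v\in G$ and $s\in\{a,b\}$. A hamiltonian path is a directed path visiting every vertex exactly once; arc-disjoint means sharing no arc. *)

theory Defs
  imports Main
begin

definition add_subgroup :: "'a::ab_group_add set \<Rightarrow> bool" where
  "add_subgroup H \<longleftrightarrow> 0 \<in> H \<and> (\<forall>x\<in>H. \<forall>y\<in>H. x + y \<in> H) \<and> (\<forall>x\<in>H. - x \<in> H)"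

definition gen_subgroup :: "'a::ab_group_add set \<Rightarrow> 'a set" where
  "gen_subgroup S = \<Inter>{H. add_subgroup H \<and> S \<subseteq> H}"

definition subgroup_index :: "'a::ab_group_add set \<Rightarrow> nat" where
  "subgroup_index H = card (UNIV :: 'a set) div card H"

definition cay_arcs :: "'a::ab_group_add \<Rightarrow> 'a \<Rightarrow> ('a \<times> 'a) set" where
  "cay_arcs a b = {(v, v + s) | v s. s \<in> {a, b}}"

definition path_arcs :: "'a list \<Rightarrow> ('a \<times> 'a) set" where
  "path_arcs p = set (zip p (tl p))"

definition ham_path :: "'a::ab_group_add \<Rightarrow> 'a \<Rightarrow> 'a list \<Rightarrow> bool" where
  "ham_path a b p \<longleftrightarrow> distinct p \<and> set p = UNIV \<and> path_arcs p \<subseteq> cay_arcs a b"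

end

(*
  Put h = b - a, H = <h>, and let m be the order of a modulo H. The cosets y + j a + H for
  j < m, the layers, are permuted cyclically by both generators. A map f with f v - v in
  {a, b} that is injective away from one vertex y, and under which every vertex reaches y,
  traces a hamiltonian path from the unique vertex without a preimage to y.

  Let f add b on the layers 1, ..., m/2 and a on the other layers, except at the points
  y - i h (0 < i < g) of layer 0, where it adds b as well. As m is even, m steps of f from
  layer 0 add w = m a + (m/2) h, plus h at the exceptional points; with g the order of h
  modulo <w>, these points link the g cosets of <w> in layer 0 into one chain ending at y.

  So the map adding a exactly where f adds b has the same
  properties, and the two paths leave every vertex along different arcs.
*)

theory Submission
  imports Defs
begin

section \<open>Natural multiples and cyclic subgroups\<close>

fun nat_scale :: "nat \<Rightarrow> 'a::monoid_add \<Rightarrow> 'a" (infixr \<open>\<cdot>\<close> 75) where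
  "0 \<cdot> x = 0"
| "Suc k \<cdot> x = x + k \<cdot> x"

lemma nat_scale_add: "(i + j) \<cdot> x = i \<cdot> x + j \<cdot> (x::'a::monoid_add)"
  by (induction i) (simp_all add: add.assoc)

lemma nat_scale_mult: "(i * j) \<cdot> x = i \<cdot> j \<cdot> (x::'a::monoid_add)"
  by (induction i) (simp_all add: nat_scale_add)

lemma nat_scale_div_mod: "n \<cdot> x = (n div m * m) \<cdot> x + (n mod m) \<cdot> (x::'a::monoid_add)"
  by (simp flip: nat_scale_add)

lemma nat_scale_add_right: "k \<cdot> (x + y) = k \<cdot> x + k \<cdot> (y::'a::comm_monoid_add)"
  by (induction k) (simp_all add: algebra_simps)

lemma nat_scale_minus_right: "k \<cdot> (- x) = - (k \<cdot> (x::'a::ab_group_add))"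
  by (induction k) simp_all

lemma nat_scale_diff_right: "k \<cdot> (x - y) = k \<cdot> x - k \<cdot> (y::'a::ab_group_add)"
  by (induction k) (simp_all add: algebra_simps)

lemma nat_scale_diff: "j \<le> i \<Longrightarrow> (i - j) \<cdot> x = i \<cdot> x - j \<cdot> (x::'a::ab_group_add)"
  using nat_scale_add[of "i - j" j x] by simp

lemma add_subgroup_add: "add_subgroup H \<Longrightarrow> x \<in> H \<Longrightarrow> y \<in> H \<Longrightarrow> x + y \<in> H"
  unfolding add_subgroup_def by blast

lemma add_subgroup_uminus: "add_subgroup H \<Longrightarrow> x \<in> H \<Longrightarrow> - x \<in> H"
  unfolding add_subgroup_def by blast

lemma add_subgroup_diff: "add_subgroup H \<Longrightarrow> x \<in> H \<Longrightarrow> y \<in> H \<Longrightarrow> x - y \<in> H"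
  unfolding add_subgroup_def by (metis diff_conv_add_uminus)

lemma add_subgroup_add_cancel: "add_subgroup H \<Longrightarrow> z \<in> H \<Longrightarrow> x + z \<in> H \<longleftrightarrow> x \<in> H"
  unfolding add_subgroup_def by (metis add_diff_cancel diff_conv_add_uminus)

lemma nat_scale_in_add_subgroup: "add_subgroup H \<Longrightarrow> x \<in> H \<Longrightarrow> k \<cdot> x \<in> H"
  by (induction k) (simp_all add: add_subgroup_def)

definition multiples :: "'a::monoid_add \<Rightarrow> 'a set" where
  "multiples x = range (\<lambda>k. k \<cdot> x)"

lemma nat_scale_in_multiples [simp]: "k \<cdot> x \<in> multiples x"
  unfolding multiples_def by simp

lemma self_in_multiples [simp]: "x \<in> multiples x"
  using nat_scale_in_multiples[of 1] by simp

lemma multiples_subset: "add_subgroup H \<Longrightarrow> x \<in> H \<Longrightarrow> multiples x \<subseteq> H"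
  unfolding multiples_def using nat_scale_in_add_subgroup by blast

context
  assumes finite_UNIV: "finite (UNIV :: 'a::ab_group_add set)"
begin

lemma finite_order:
  obtains n where "0 < n" "n \<cdot> (x::'a) = 0"
proof -
  have "\<not> inj_on (\<lambda>k. k \<cdot> x) {..card (UNIV :: 'a set)}"
    using card_inj_on_le[OF _ subset_UNIV finite_UNIV] by fastforce
  then obtain i j where "i < j" "i \<cdot> x = j \<cdot> x"
    unfolding inj_on_def by (metis linorder_neqE_nat)
  then have "(j - i) \<cdot> x = 0"
    by (simp add: nat_scale_diff)
  with \<open>i < j\<close> show thesis
    using that[of "j - i"] by simp
qed

lemma add_subgroup_multiples: "add_subgroup (multiples (x::'a))"
  unfolding add_subgroup_def
proof (intro conjI ballI)
  show "0 \<in> multiples x"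
    using nat_scale_in_multiples[of 0] by simp
next
  fix u v assume "u \<in> multiples x" "v \<in> multiples x"
  then show "u + v \<in> multiples x"
    unfolding multiples_def by (auto simp flip: nat_scale_add)
next
  fix u assume "u \<in> multiples x"
  then obtain k where u: "u = k \<cdot> x"
    unfolding multiples_def by blast
  obtain n where "0 < n" "n \<cdot> x = 0"
    using finite_order by blast
  then have "- x = (n - 1) \<cdot> x"
    using nat_scale_add[of "n - 1" 1 x] by (simp add: add_eq_0_iff2)
  then have "- u = (k * (n - 1)) \<cdot> x"
    unfolding u nat_scale_mult by (metis nat_scale_minus_right)
  then show "- u \<in> multiples x"
    by simp
qed

lemma uminus_in_multiples: "u \<in> multiples x \<Longrightarrow> - u \<in> multiples (x::'a)"
  using add_subgroup_multiples by (rule add_subgroup_uminus)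

lemma multiples_uminus: "multiples (- x) = multiples (x::'a)"
proof -
  have "multiples (- z) \<subseteq> multiples z" for z :: 'a
    by (intro multiples_subset add_subgroup_multiples uminus_in_multiples self_in_multiples)
  from this[of x] this[of "- x"] show ?thesis
    by simp
qed

lemma gen_subgroup_singleton: "gen_subgroup {x} = multiples (x::'a)"
  using add_subgroup_multiples[of x] multiples_subset
  unfolding gen_subgroup_def by auto

lemma add_subgroup_nat_scale_sums: "add_subgroup {i \<cdot> a + j \<cdot> b | i j. True}" (is "add_subgroup ?T")
  for a b :: 'a
  unfolding add_subgroup_def
proof (intro conjI ballI)
  have "0 = 0 \<cdot> a + 0 \<cdot> b"
    by simp
  then show "0 \<in> ?T"
    by blast
next
  fix u v assume "u \<in> ?T" "v \<in> ?T"
  then obtain i j i' j' where "u = i \<cdot> a + j \<cdot> b" "v = i' \<cdot> a + j' \<cdot> b"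
    by blast
  then have "u + v = (i + i') \<cdot> a + (j + j') \<cdot> b"
    by (simp add: nat_scale_add algebra_simps)
  then show "u + v \<in> ?T"
    by blast
next
  fix u assume "u \<in> ?T"
  then obtain i j where u: "u = i \<cdot> a + j \<cdot> b"
    by blast
  have "- (i \<cdot> a) \<in> multiples a" "- (j \<cdot> b) \<in> multiples b"
    by (rule uminus_in_multiples[OF nat_scale_in_multiples])+
  then obtain i' j' where "- (i \<cdot> a) = i' \<cdot> a" "- (j \<cdot> b) = j' \<cdot> b"
    unfolding multiples_def by (metis rangeE)
  then have "- u = i' \<cdot> a + j' \<cdot> b"
    unfolding u by (simp add: algebra_simps)
  then show "- u \<in> ?T"
    by blast
qed

lemma gen_subgroup_pair: "gen_subgroup {a, b} = {i \<cdot> a + j \<cdot> b | i j. True}" (is "_ = ?T")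
  for a b :: 'a
proof
  have "a = 1 \<cdot> a + 0 \<cdot> b" "b = 0 \<cdot> a + 1 \<cdot> b"
    by simp_all
  then have "{a, b} \<subseteq> ?T"
    by blast
  with add_subgroup_nat_scale_sums show "gen_subgroup {a, b} \<subseteq> ?T"
    unfolding gen_subgroup_def by blast
next
  have "i \<cdot> a + j \<cdot> b \<in> H" if "add_subgroup H" "{a, b} \<subseteq> H" for H i j
    using that nat_scale_in_add_subgroup[OF that(1)] unfolding add_subgroup_def by simp
  then show "?T \<subseteq> gen_subgroup {a, b}"
    unfolding gen_subgroup_def by blast
qed

end

section \<open>Order modulo a subgroup\<close>

definition rel_order :: "'a::monoid_add set \<Rightarrow> 'a \<Rightarrow> nat" where
  "rel_order H x = (LEAST n. 0 < n \<and> n \<cdot> x \<in> H)"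

lemma rel_order_cong:
  assumes "add_subgroup H" "x - x' \<in> H"
  shows "rel_order H x = rel_order H (x'::'a::ab_group_add)"
proof -
  have "n \<cdot> x = n \<cdot> x' + n \<cdot> (x - x')" for n
    by (simp add: nat_scale_diff_right)
  then have "n \<cdot> x \<in> H \<longleftrightarrow> n \<cdot> x' \<in> H" for n
    using add_subgroup_add_cancel[OF assms(1) nat_scale_in_add_subgroup[OF assms]] by simp
  then show ?thesis
    unfolding rel_order_def by simp
qed

lemma rel_order_uminus:
  assumes "add_subgroup H"
  shows "rel_order H (- x) = rel_order H (x::'a::ab_group_add)"
proof -
  have "n \<cdot> (- x) \<in> H \<longleftrightarrow> n \<cdot> x \<in> H" for n
    using add_subgroup_uminus[OF assms] by (metis minus_minus nat_scale_minus_right)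
  then show ?thesis
    unfolding rel_order_def by simp
qed

context
  fixes H :: "'a::ab_group_add set" and x :: 'a
  assumes finite_UNIV: "finite (UNIV :: 'a set)" and subgroup: "add_subgroup H"
begin

lemma rel_order_pos_and_mem: "0 < rel_order H x \<and> rel_order H x \<cdot> x \<in> H"
proof -
  obtain n where "0 < n" "n \<cdot> x = 0"
    using finite_order[OF finite_UNIV] by blast
  then have "0 < n \<and> n \<cdot> x \<in> H"
    using subgroup by (simp add: add_subgroup_def)
  then show ?thesis
    unfolding rel_order_def by (rule LeastI)
qed

lemma rel_order_pos: "0 < rel_order H x"
  using rel_order_pos_and_mem by blast

lemma rel_order_in_subgroup: "rel_order H x \<cdot> x \<in> H"
  using rel_order_pos_and_mem by blast

lemma not_in_subgroup_below_rel_order: "0 < n \<Longrightarrow> n < rel_order H x \<Longrightarrow> n \<cdot> x \<notin> H"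
  unfolding rel_order_def using not_less_Least by blast

lemma rel_order_cancel:
  assumes "i < rel_order H x" "j < rel_order H x" "i \<cdot> x - j \<cdot> x \<in> H"
  shows "i = j"
proof (rule ccontr)
  assume "i \<noteq> j"
  then consider "j < i" | "i < j"
    by linarith
  then show False
  proof cases
    case 1
    then have "(i - j) \<cdot> x \<in> H"
      using assms(3) by (simp add: nat_scale_diff)
    with 1 assms(1) show False
      using not_in_subgroup_below_rel_order[of "i - j"] by simp
  next
    case 2
    then have "(j - i) \<cdot> x \<in> H"
      using add_subgroup_uminus[OF subgroup assms(3)] by (simp add: nat_scale_diff)
    with 2 assms(2) show False
      using not_in_subgroup_below_rel_order[of "j - i"] by simp
  qed
qed

lemma nat_scale_mod_rel_order: "n \<cdot> x - (n mod rel_order H x) \<cdot> x \<in> H"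
proof -
  have "(n div rel_order H x * rel_order H x) \<cdot> x \<in> H"
    unfolding nat_scale_mult by (rule nat_scale_in_add_subgroup[OF subgroup rel_order_in_subgroup])
  then show ?thesis
    by (subst nat_scale_div_mod[of n _ "rel_order H x"]) simp
qed

lemma card_UNIV_eq_rel_order_mult:
  assumes cover: "\<And>v. \<exists>n. v - n \<cdot> x \<in> H"
  shows "card (UNIV :: 'a set) = rel_order H x * card H"
proof -
  define coset where "coset j = (\<lambda>z. j \<cdot> x + z) ` H" for j
  have cosets: "UNIV = (\<Union>j<rel_order H x. coset j)"
  proof (intro set_eqI iffI)
    fix v :: 'a
    obtain n where "v - n \<cdot> x \<in> H"
      using cover by blast
    then have "(v - n \<cdot> x) + (n \<cdot> x - (n mod rel_order H x) \<cdot> x) \<in> H"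
      by (rule add_subgroup_add[OF subgroup _ nat_scale_mod_rel_order])
    then have "v - (n mod rel_order H x) \<cdot> x \<in> H"
      by simp
    then show "v \<in> (\<Union>j<rel_order H x. coset j)"
      unfolding coset_def using rel_order_pos
      by (auto intro!: bexI[of _ "n mod rel_order H x"] image_eqI[of v _ "v - _ \<cdot> x"])
  qed simp
  have disjoint: "coset i \<inter> coset j = {}" if "i < rel_order H x" "j < rel_order H x" "i \<noteq> j" for i j
  proof -
    have "i \<cdot> x - j \<cdot> x \<notin> H"
      using rel_order_cancel that by blast
    moreover have "i \<cdot> x - j \<cdot> x = z' - z" if "i \<cdot> x + z = j \<cdot> x + z'" for z z'
      using that by (simp add: algebra_simps)
    ultimately have "i \<cdot> x + z \<noteq> j \<cdot> x + z'" if "z \<in> H" "z' \<in> H" for z z'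
      using add_subgroup_diff[OF subgroup that(2,1)] by metis
    then show ?thesis
      unfolding coset_def by blast
  qed
  have "card (UNIV :: 'a set) = (\<Sum>j<rel_order H x. card (coset j))"
    unfolding cosets
    by (rule card_UN_disjoint) (use rev_finite_subset[OF finite_UNIV] disjoint in auto)
  also have "\<dots> = rel_order H x * card H"
    unfolding coset_def by (simp add: card_image)
  finally show ?thesis .
qed

end

section \<open>Paths traced by a map\<close>

lemma path_arcs_iterates:
  "path_arcs (map (\<lambda>i. (f ^^ i) x) [0..<Suc n]) = (\<lambda>i. ((f ^^ i) x, f ((f ^^ i) x))) ` {..<n}"
proof -
  have "map (\<lambda>i. (f ^^ i) x) [0..<Suc n] = map (\<lambda>i. (f ^^ i) x) [0..<n] @ [(f ^^ n) x]"
    by simp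
  moreover have "tl (map (\<lambda>i. (f ^^ i) x) [0..<Suc n]) = map (\<lambda>i. f ((f ^^ i) x)) [0..<n]"
    by (simp add: map_upt_Suc del: upt_Suc)
  ultimately show ?thesis
    unfolding path_arcs_def
    by (simp add: zip_append1 zip_map_map zip_same_conv_map image_image atLeast_upt del: upt_Suc)
qed

context
  fixes f :: "'a \<Rightarrow> 'a" and x y :: 'a and n :: nat
  assumes inj: "inj_on f (- {y})"
    and source: "x \<notin> f ` (- {y})"
    and before_y: "\<And>i. i < n \<Longrightarrow> (f ^^ i) x \<noteq> y"
begin

lemma iterates_inj_on: "inj_on (\<lambda>i. (f ^^ i) x) {..n}"
proof -
  have "(f ^^ i) x \<noteq> (f ^^ j) x" if "i < j" "j \<le> n" for i j
    using that
  proof (induction i arbitrary: j)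
    case 0
    then obtain j' where "j = Suc j'" "j' < n"
      by (cases j) auto
    then show ?case
      using source before_y[of j'] by auto
  next
    case (Suc i)
    then obtain j' where "j = Suc j'" "i < j'" "j' < n"
      by (cases j) auto
    then show ?case
      using Suc.IH[of j'] before_y[of i] before_y[of j'] inj by (auto dest: inj_onD)
  qed
  then show ?thesis
    by (intro inj_onI) (metis atMost_iff linorder_neqE_nat)
qed

lemma reaches_y_imp_iterate:
  assumes hits_y: "(f ^^ n) x = y"
  shows "(f ^^ k) v = y \<Longrightarrow> v \<in> (\<lambda>i. (f ^^ i) x) ` {..n}"
proof (induction k arbitrary: v)
  case 0
  then show ?case
    using hits_y by force
next
  case (Suc k)
  then have "f v \<in> (\<lambda>i. (f ^^ i) x) ` {..n}"
    by (simp add: funpow_Suc_right del: funpow.simps)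
  then obtain i where i: "i \<le> n" "f v = (f ^^ i) x"
    by auto
  show ?case
  proof (cases "v = y")
    case True
    then show ?thesis
      using hits_y by force
  next
    case False
    with i source obtain i' where "i = Suc i'"
      by (cases i) auto
    with i False have "v = (f ^^ i') x"
      using before_y[of i'] inj by (auto dest: inj_onD)
    with \<open>i = Suc i'\<close> i show ?thesis
      by force
  qed
qed

end

lemma functional_graph_path:
  fixes f :: "'a \<Rightarrow> 'a"
  assumes inj: "inj_on f (- {y})"
    and source: "x \<notin> f ` (- {y})"
    and reach: "\<And>v. \<exists>k. (f ^^ k) v = y"
  shows "\<exists>p. distinct p \<and> set p = UNIV \<and> path_arcs p \<subseteq> range (\<lambda>v. (v, f v))"
proof -
  define n where "n = (LEAST k. (f ^^ k) x = y)"
  define p where "p = map (\<lambda>i. (f ^^ i) x) [0..<Suc n]"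
  have hits_y: "(f ^^ n) x = y"
    unfolding n_def using reach by (rule LeastI_ex)
  have before_y: "(f ^^ i) x \<noteq> y" if "i < n" for i
    using not_less_Least[of i "\<lambda>k. (f ^^ k) x = y"] that unfolding n_def by blast
  have set_p: "set p = (\<lambda>i. (f ^^ i) x) ` {..n}"
    unfolding p_def by (simp add: atLeast0LessThan lessThan_Suc_atMost del: upt_Suc)
  have "distinct p"
    unfolding p_def distinct_map
    using iterates_inj_on[OF inj source before_y]
    by (simp add: atLeast0LessThan lessThan_Suc_atMost del: upt_Suc)
  moreover have "set p = UNIV"
    unfolding set_p using reaches_y_imp_iterate[OF inj source before_y hits_y] reach by blast
  moreover have "path_arcs p \<subseteq> range (\<lambda>v. (v, f v))"
    unfolding p_def path_arcs_iterates by blast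
  ultimately show ?thesis
    by blast
qed

lemma funpow_reaches_by_translation:
  fixes \<phi> :: "'a::ab_group_add \<Rightarrow> 'a"
  assumes step: "\<And>v. z - v \<in> multiples w \<Longrightarrow> v \<noteq> z \<Longrightarrow> \<phi> v = v + w"
    and start: "z - u \<in> multiples w"
  shows "\<exists>k. (\<phi> ^^ k) u = z"
proof -
  obtain d where "z - u = d \<cdot> w"
    using start unfolding multiples_def by blast
  then show ?thesis
  proof (induction d arbitrary: u)
    case 0
    then show ?case
      by (intro exI[of _ 0]) simp
  next
    case (Suc d)
    show ?case
    proof (cases "u = z")
      case True
      then show ?thesis
        by (intro exI[of _ 0]) simp
    next
      case False
      have "z - u \<in> multiples w"
        unfolding Suc.prems by (rule nat_scale_in_multiples)
      then have "\<phi> u = u + w"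
        using False by (rule step)
      moreover have "z - (u + w) = d \<cdot> w"
        using Suc.prems by (simp add: diff_diff_eq[symmetric])
      then obtain k where "(\<phi> ^^ k) (u + w) = z"
        using Suc.IH by blast
      ultimately have "(\<phi> ^^ Suc k) u = z"
        by (simp add: funpow_Suc_right del: funpow.simps)
      then show ?thesis ..
    qed
  qed
qed

section \<open>The switching walk\<close>

definition switch_map :: "'a set \<Rightarrow> 'a \<Rightarrow> 'a \<Rightarrow> 'a \<Rightarrow> 'a::plus" where
  "switch_map S s t v = (if v \<in> S then v + t else v + s)"

lemma switch_map_inside: "v \<in> S \<Longrightarrow> switch_map S s t v = v + t"
  by (simp add: switch_map_def)

lemma switch_map_outside: "v \<notin> S \<Longrightarrow> switch_map S s t v = v + s"
  by (simp add: switch_map_def)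

lemma switch_map_iterate_inside:
  fixes s t :: "'a::comm_monoid_add"
  assumes "\<And>i. i < k \<Longrightarrow> (switch_map S s t ^^ i) z \<in> S"
  shows "(switch_map S s t ^^ k) z = z + k \<cdot> t"
  using assms
proof (induction k)
  case (Suc k)
  have "(switch_map S s t ^^ Suc k) z = (switch_map S s t ^^ k) z + t"
    using Suc.prems[of k] by (simp add: switch_map_inside)
  also have "\<dots> = z + Suc k \<cdot> t"
    using Suc by (simp add: algebra_simps)
  finally show ?case .
qed simp

lemma switch_map_iterate_outside:
  fixes s t :: "'a::comm_monoid_add"
  assumes "\<And>i. i < k \<Longrightarrow> (switch_map S s t ^^ i) z \<notin> S"
  shows "(switch_map S s t ^^ k) z = z + k \<cdot> s"
  using assms
proof (induction k)
  case (Suc k)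
  have "(switch_map S s t ^^ Suc k) z = (switch_map S s t ^^ k) z + s"
    using Suc.prems[of k] by (simp add: switch_map_outside)
  also have "\<dots> = z + Suc k \<cdot> s"
    using Suc by (simp add: algebra_simps)
  finally show ?case .
qed simp

lemma switch_map_arcs_disjoint:
  fixes s t :: "'a::cancel_semigroup_add"
  assumes "s \<noteq> t"
    and "P \<subseteq> range (\<lambda>v. (v, switch_map S s t v))" "Q \<subseteq> range (\<lambda>v. (v, switch_map S t s v))"
  shows "P \<inter> Q = {}"
  using assms by (auto simp: switch_map_def split: if_splits)

lemma ham_path_switch_map:
  assumes "distinct p" "set p = UNIV" "path_arcs p \<subseteq> range (\<lambda>v. (v, switch_map S s t v))"
  shows "ham_path s t p"
  using assms unfolding ham_path_def cay_arcs_def switch_map_def by auto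

lemma ham_path_commute: "ham_path b a p = ham_path a b p"
  unfolding ham_path_def cay_arcs_def by (simp add: insert_commute)

definition layer_order :: "'a::ab_group_add \<Rightarrow> 'a \<Rightarrow> nat" where
  "layer_order s t = rel_order (multiples (t - s)) s"

definition layer :: "'a::ab_group_add \<Rightarrow> 'a \<Rightarrow> 'a \<Rightarrow> nat \<Rightarrow> 'a set" where
  "layer s t y j = {v. v - y - j \<cdot> s \<in> multiples (t - s)}"

definition round_shift :: "'a::ab_group_add \<Rightarrow> 'a \<Rightarrow> 'a" where
  "round_shift s t = layer_order s t \<cdot> s + (layer_order s t div 2) \<cdot> (t - s)"

definition class_order :: "'a::ab_group_add \<Rightarrow> 'a \<Rightarrow> nat" where
  "class_order s t = rel_order (multiples (round_shift s t)) (t - s)"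

definition exceptional_points :: "'a::ab_group_add \<Rightarrow> 'a \<Rightarrow> 'a \<Rightarrow> 'a set" where
  "exceptional_points s t y = (\<lambda>i. y - i \<cdot> (t - s)) ` {0<..<class_order s t}"

definition switch_set :: "'a::ab_group_add \<Rightarrow> 'a \<Rightarrow> 'a \<Rightarrow> 'a set" where
  "switch_set s t y = (\<Union>j\<in>{1..layer_order s t div 2}. layer s t y j) \<union> exceptional_points s t y"

context
  fixes s t :: "'a::ab_group_add"
  assumes finite_UNIV: "finite (UNIV :: 'a set)"
begin

lemma generated_cover:
  assumes "gen_subgroup {s, t} = UNIV"
  shows "\<exists>n. v - n \<cdot> s \<in> multiples (t - s)"
proof -
  obtain i j where "v = i \<cdot> s + j \<cdot> t"
    using gen_subgroup_pair[OF finite_UNIV, of s t] assms by blast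
  then have "v - (i + j) \<cdot> s = j \<cdot> (t - s)"
    by (simp add: nat_scale_add nat_scale_diff_right)
  then show ?thesis
    by (metis nat_scale_in_multiples)
qed

lemma subgroup_index_eq_layer_order:
  assumes "gen_subgroup {s, t} = UNIV"
  shows "subgroup_index (gen_subgroup {s - t}) = layer_order s t"
proof -
  have "gen_subgroup {s - t} = multiples (t - s)"
    using gen_subgroup_singleton[OF finite_UNIV] multiples_uminus[OF finite_UNIV, of "t - s"]
    by simp
  moreover have "card (UNIV :: 'a set) = layer_order s t * card (multiples (t - s))"
    unfolding layer_order_def
    by (rule card_UNIV_eq_rel_order_mult[OF finite_UNIV add_subgroup_multiples[OF finite_UNIV]
          generated_cover[OF assms]])
  moreover have "finite (multiples (t - s))" "multiples (t - s) \<noteq> {}"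
    using rev_finite_subset[OF finite_UNIV] self_in_multiples by blast+
  ultimately show ?thesis
    unfolding subgroup_index_def by (simp add: card_gt_0_iff)
qed

lemma layer_order_swap: "layer_order t s = layer_order s t"
proof -
  have "layer_order t s = rel_order (multiples (t - s)) t"
    unfolding layer_order_def using multiples_uminus[OF finite_UNIV, of "t - s"] by simp
  also have "\<dots> = layer_order s t"
    unfolding layer_order_def
    by (rule rel_order_cong[OF add_subgroup_multiples[OF finite_UNIV]]) simp
  finally show ?thesis .
qed

lemma layer_swap: "layer t s (y - n \<cdot> (t - s)) j = layer s t y j"
proof -
  have shift: "v - (y - n \<cdot> (t - s)) - j \<cdot> t = (v - y - j \<cdot> s) + (n \<cdot> (t - s) - j \<cdot> (t - s))"
    for v
    by (simp add: nat_scale_diff_right algebra_simps)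
  have "n \<cdot> (t - s) - j \<cdot> (t - s) \<in> multiples (t - s)"
    using add_subgroup_diff[OF add_subgroup_multiples[OF finite_UNIV]] by simp
  moreover have "multiples (s - t) = multiples (t - s)"
    using multiples_uminus[OF finite_UNIV, of "t - s"] by simp
  ultimately show ?thesis
    unfolding layer_def shift
    by (simp only: add_subgroup_add_cancel[OF add_subgroup_multiples[OF finite_UNIV]])
qed

context
  assumes even_layer_order: "even (layer_order s t)"
begin

lemma round_shift_swap: "round_shift t s = round_shift s t"
proof -
  define k where "k = layer_order s t div 2"
  have m: "layer_order s t = k + k"
    using even_layer_order unfolding k_def by auto
  have "t = s + (t - s)"
    by simp
  then have "(k + k) \<cdot> t = (k + k) \<cdot> s + k \<cdot> (t - s) + k \<cdot> (t - s)"
    by (metis add.assoc nat_scale_add nat_scale_add_right)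
  then show ?thesis
    unfolding round_shift_def layer_order_swap m
    by (simp add: nat_scale_diff_right algebra_simps)
qed

lemma class_order_swap: "class_order t s = class_order s t"
  unfolding class_order_def round_shift_swap
  using rel_order_uminus[OF add_subgroup_multiples[OF finite_UNIV], of _ "t - s"] by simp

lemma exceptional_points_swap:
  "exceptional_points t s (y - class_order s t \<cdot> (t - s)) = exceptional_points s t y"
proof -
  define g where "g = class_order s t"
  have reflect: "(-) g ` {0<..<g} = {0<..<g}"
  proof
    show "{0<..<g} \<subseteq> (-) g ` {0<..<g}"
    proof
      fix i assume "i \<in> {0<..<g}"
      then have "g - i \<in> {0<..<g}" "i = g - (g - i)"
        by auto
      then show "i \<in> (-) g ` {0<..<g}"
        by (rule rev_image_eqI)
    qed
  qed auto
  have "y - g \<cdot> (t - s) - i \<cdot> (s - t) = y - (g - i) \<cdot> (t - s)" if "i \<in> {0<..<g}" for i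
    using that by (simp add: nat_scale_diff nat_scale_diff_right algebra_simps)
  then have "(\<lambda>i. y - g \<cdot> (t - s) - i \<cdot> (s - t)) ` {0<..<g}
      = (\<lambda>i. y - i \<cdot> (t - s)) ` (-) g ` {0<..<g}"
    unfolding image_image by (rule image_cong[OF refl])
  with reflect show ?thesis
    unfolding exceptional_points_def class_order_swap g_def[symmetric] by simp
qed

lemma switch_set_swap: "switch_set t s (y - class_order s t \<cdot> (t - s)) = switch_set s t y"
  unfolding switch_set_def layer_swap layer_order_swap exceptional_points_swap ..

end

end

locale switch_walk =
  fixes s t y :: "'a::ab_group_add"
  assumes finite_UNIV: "finite (UNIV :: 'a set)"
    and generated: "gen_subgroup {s, t} = UNIV"
    and even_layer_order: "even (layer_order s t)"
begin

abbreviation "h \<equiv> t - s"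
abbreviation "H \<equiv> multiples h"
abbreviation "m \<equiv> layer_order s t"
abbreviation "L \<equiv> layer s t y"
abbreviation "w \<equiv> round_shift s t"
abbreviation "W \<equiv> multiples w"
abbreviation "g \<equiv> class_order s t"
abbreviation "E \<equiv> exceptional_points s t y"
abbreviation "S \<equiv> switch_set s t y"
abbreviation "f \<equiv> switch_map S s t"

lemma subgroup_H: "add_subgroup H"
  by (rule add_subgroup_multiples[OF finite_UNIV])

lemma subgroup_W: "add_subgroup W"
  by (rule add_subgroup_multiples[OF finite_UNIV])

lemma two_le_m: "2 \<le> m"
  using rel_order_pos[OF finite_UNIV subgroup_H, of s] even_layer_order
  unfolding layer_order_def by presburger

lemma g_pos: "0 < g"
  unfolding class_order_def by (rule rel_order_pos[OF finite_UNIV subgroup_W])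

lemma W_subset_H: "W \<subseteq> H"
proof (rule multiples_subset[OF subgroup_H])
  show "w \<in> H"
    unfolding round_shift_def layer_order_def
    by (intro add_subgroup_add[OF subgroup_H] rel_order_in_subgroup[OF finite_UNIV subgroup_H]
        nat_scale_in_multiples)
qed

lemma layer_cover: "\<exists>j<m. v \<in> L j"
proof -
  obtain n where "v - y - n \<cdot> s \<in> H"
    using generated_cover[OF finite_UNIV generated] by blast
  then have "(v - y - n \<cdot> s) + (n \<cdot> s - (n mod m) \<cdot> s) \<in> H"
    unfolding layer_order_def
    by (rule add_subgroup_add[OF subgroup_H _ nat_scale_mod_rel_order[OF finite_UNIV subgroup_H]])
  then have "v \<in> L (n mod m)"
    unfolding layer_def by simp
  moreover have "n mod m < m"
    using two_le_m by simp
  ultimately show ?thesis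
    by blast
qed

lemma layer_unique:
  assumes "v \<in> L i" "v \<in> L j" "i < m" "j < m"
  shows "i = j"
proof -
  have "(v - y - i \<cdot> s) - (v - y - j \<cdot> s) \<in> H"
    using assms(1,2) unfolding layer_def mem_Collect_eq by (rule add_subgroup_diff[OF subgroup_H])
  then have "j \<cdot> s - i \<cdot> s \<in> H"
    by simp
  then show "i = j"
    using rel_order_cancel[OF finite_UNIV subgroup_H, of j s i] assms(3,4)
    unfolding layer_order_def by simp
qed

lemma layer_m: "L m = L 0"
proof -
  have "m \<cdot> s \<in> H"
    unfolding layer_order_def by (rule rel_order_in_subgroup[OF finite_UNIV subgroup_H])
  then have "(v - y - m \<cdot> s) + m \<cdot> s \<in> H \<longleftrightarrow> v - y - m \<cdot> s \<in> H" for v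
    by (rule add_subgroup_add_cancel[OF subgroup_H])
  then show ?thesis
    unfolding layer_def by simp
qed

lemma switch_map_layer:
  assumes "v \<in> L j"
  shows "f v \<in> L (Suc j)"
proof (cases "v \<in> S")
  case True
  then have step: "f v - y - Suc j \<cdot> s = (v - y - j \<cdot> s) + h"
    by (simp add: switch_map_inside algebra_simps)
  show ?thesis
    using assms unfolding layer_def mem_Collect_eq step
    by (simp add: add_subgroup_add[OF subgroup_H])
next
  case False
  then have step: "f v - y - Suc j \<cdot> s = v - y - j \<cdot> s"
    by (simp add: switch_map_outside algebra_simps)
  show ?thesis
    using assms unfolding layer_def mem_Collect_eq step .
qed

lemma iterate_layer: "v \<in> L j \<Longrightarrow> (f ^^ k) v \<in> L (j + k)"
  by (induction k) (simp_all add: switch_map_layer)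

lemma exceptional_iff: "e \<in> E \<longleftrightarrow> (\<exists>i. 0 < i \<and> i < g \<and> e = y - i \<cdot> h)"
  unfolding exceptional_points_def by auto

lemma exceptional_layer_0: "E \<subseteq> L 0"
  unfolding exceptional_points_def layer_def
  using add_subgroup_uminus[OF subgroup_H] by auto

lemma switch_set_layer:
  assumes "v \<in> L j" "j < m"
  shows "v \<in> S \<longleftrightarrow> (1 \<le> j \<and> j \<le> m div 2) \<or> (j = 0 \<and> v \<in> E)"
proof -
  have "v \<in> (\<Union>j'\<in>{1..m div 2}. L j') \<longleftrightarrow> 1 \<le> j \<and> j \<le> m div 2"
  proof
    assume "v \<in> (\<Union>j'\<in>{1..m div 2}. L j')"
    then obtain j' where "j' \<in> {1..m div 2}" "v \<in> L j'"
      by blast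
    moreover from this have "j' < m"
      using two_le_m by simp presburger
    ultimately have "j' = j"
      using layer_unique[OF _ assms(1) _ assms(2)] by simp
    with \<open>j' \<in> {1..m div 2}\<close> show "1 \<le> j \<and> j \<le> m div 2"
      by simp
  qed (use assms in auto)
  moreover have "j = 0" if "v \<in> E"
    using layer_unique[OF subsetD[OF exceptional_layer_0 that] assms(1) _ assms(2)] two_le_m by simp
  ultimately show ?thesis
    unfolding switch_set_def by blast
qed

lemma switch_map_layer_0:
  assumes "v \<in> L 0"
  shows "f v = v + s + (if v \<in> E then h else 0)"
  using switch_set_layer[OF assms] two_le_m
  by (auto simp: switch_map_inside switch_map_outside algebra_simps)

lemma round_trip:
  assumes "u \<in> L 0"
  shows "(f ^^ m) u = u + w + (if u \<in> E then h else 0)"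
proof -
  define k where "k = m div 2"
  have k: "m = k + k" "1 \<le> k"
    using even_layer_order two_le_m unfolding k_def by auto
  \<comment> \<open>One step out of layer 0, then \<open>k\<close> steps by \<open>t\<close> through the layers \<open>1..k\<close>,
    then \<open>k - 1\<close> steps by \<open>s\<close> back to layer 0.\<close>
  define u\<^sub>1 where "u\<^sub>1 = f u"
  define u\<^sub>2 where "u\<^sub>2 = (f ^^ k) u\<^sub>1"
  have layer_u\<^sub>1: "u\<^sub>1 \<in> L 1"
    unfolding u\<^sub>1_def using switch_map_layer[OF assms] by simp
  have "(f ^^ i) u\<^sub>1 \<in> S" if "i < k" for i
    using switch_set_layer[OF iterate_layer[OF layer_u\<^sub>1, of i]] that k by simp
  then have u\<^sub>2: "u\<^sub>2 = u\<^sub>1 + k \<cdot> t"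
    unfolding u\<^sub>2_def by (rule switch_map_iterate_inside)
  have "(f ^^ i) u\<^sub>2 \<notin> S" if "i < k - 1" for i
    using switch_set_layer[OF iterate_layer[OF iterate_layer[OF layer_u\<^sub>1, of k], of i]] that k
    unfolding u\<^sub>2_def by simp
  then have "(f ^^ (k - 1)) u\<^sub>2 = u\<^sub>2 + (k - 1) \<cdot> s"
    by (rule switch_map_iterate_outside)
  moreover have "(f ^^ m) u = (f ^^ (k - 1)) u\<^sub>2"
  proof -
    have "m = Suc ((k - 1) + k)"
      using k by simp
    then have "(f ^^ m) u = (f ^^ ((k - 1) + k)) u\<^sub>1"
      unfolding u\<^sub>1_def by (simp only: funpow_Suc_right o_apply)
    then show ?thesis
      unfolding u\<^sub>2_def by (simp only: funpow_add o_apply)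
  qed
  moreover have "s + (k - 1) \<cdot> s = k \<cdot> s"
    using k by (cases k) simp_all
  moreover have "w = k \<cdot> s + k \<cdot> t"
    unfolding round_shift_def k_def[symmetric] k(1)
    by (simp add: nat_scale_add nat_scale_diff_right algebra_simps)
  ultimately show ?thesis
    unfolding u\<^sub>2 u\<^sub>1_def switch_map_layer_0[OF assms] by (simp add: algebra_simps)
qed

lemma exceptional_classes_distinct:
  assumes "i < g" "i' < g" "(y - i \<cdot> h) - (y - i' \<cdot> h) \<in> W"
  shows "i = i'"
  using rel_order_cancel[OF finite_UNIV subgroup_W, of i' h i] assms
  unfolding class_order_def by simp

lemma reaches_class_representative:
  assumes "i < g" "(y - i \<cdot> h) - u \<in> W"
  shows "\<exists>k. (f ^^ k) u = y - i \<cdot> h"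
proof -
  have "(f ^^ m) v = v + w" if "(y - i \<cdot> h) - v \<in> W" "v \<noteq> y - i \<cdot> h" for v
  proof -
    have "- ((y - i \<cdot> h) - v) + - (i \<cdot> h) \<in> H"
      using W_subset_H that(1)
      by (intro add_subgroup_add[OF subgroup_H] add_subgroup_uminus[OF subgroup_H]) auto
    then have "v \<in> L 0"
      unfolding layer_def by (simp add: algebra_simps)
    moreover have "v \<notin> E"
    proof
      assume "v \<in> E"
      then obtain i' where "i' < g" "v = y - i' \<cdot> h"
        unfolding exceptional_iff by blast
      with that assms(1) show False
        using exceptional_classes_distinct by blast
    qed
    ultimately show ?thesis
      using round_trip by simp
  qed
  then obtain k where "((f ^^ m) ^^ k) u = y - i \<cdot> h"
    using funpow_reaches_by_translation[OF _ assms(2)] by blast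
  then show ?thesis
    unfolding funpow_mult by blast
qed

lemma reaches_from_class:
  assumes "i < g" "(y - i \<cdot> h) - u \<in> W"
  shows "\<exists>k. (f ^^ k) u = y"
  using assms
proof (induction i arbitrary: u)
  case 0
  then show ?case
    using reaches_class_representative by fastforce
next
  case (Suc i)
  define e where "e = y - Suc i \<cdot> h"
  obtain k\<^sub>1 where k\<^sub>1: "(f ^^ k\<^sub>1) u = e"
    using reaches_class_representative[OF Suc.prems] unfolding e_def by blast
  have "e \<in> E"
    unfolding exceptional_iff e_def using Suc.prems(1) by blast
  then have round: "(f ^^ m) e = e + w + h"
    using round_trip exceptional_layer_0 by auto
  have shift: "(y - i \<cdot> h) - (e + w + h) = - w"
    unfolding e_def by (simp add: algebra_simps)
  have "(y - i \<cdot> h) - (e + w + h) \<in> W"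
    unfolding shift by (rule uminus_in_multiples[OF finite_UNIV self_in_multiples])
  then obtain k\<^sub>2 where "(f ^^ k\<^sub>2) (e + w + h) = y"
    using Suc.IH Suc.prems(1) Suc_lessD by blast
  with round have "(f ^^ (k\<^sub>2 + m + k\<^sub>1)) u = y"
    using k\<^sub>1 by (simp add: funpow_add)
  then show ?case ..
qed

lemma reaches_y: "\<exists>k. (f ^^ k) v = y"
proof -
  obtain j where "j < m" "v \<in> L j"
    using layer_cover by blast
  define u where "u = (f ^^ (m - j)) v"
  have "u \<in> L 0"
    unfolding u_def using iterate_layer[OF \<open>v \<in> L j\<close>, of "m - j"] layer_m \<open>j < m\<close> by simp
  then have "u - y \<in> H"
    unfolding layer_def by simp
  then have "- (u - y) \<in> H"
    by (rule uminus_in_multiples[OF finite_UNIV])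
  then obtain n where "- (u - y) = n \<cdot> h"
    unfolding multiples_def by (rule rangeE)
  then have representative: "(y - (n mod g) \<cdot> h) - u = n \<cdot> h - (n mod g) \<cdot> h"
    by (simp add: algebra_simps flip: \<open>- (u - y) = n \<cdot> h\<close>)
  have "(y - (n mod g) \<cdot> h) - u \<in> W"
    unfolding representative unfolding class_order_def
    by (rule nat_scale_mod_rel_order[OF finite_UNIV subgroup_W])
  then obtain k where "(f ^^ k) u = y"
    using reaches_from_class[OF mod_less_divisor[OF g_pos]] by blast
  then have "(f ^^ (k + (m - j))) v = y"
    unfolding u_def by (simp add: funpow_add)
  then show ?thesis ..
qed

lemma switch_set_add_h:
  assumes "v \<in> S" "v + h \<noteq> y"
  shows "v + h \<in> S"
proof -
  obtain j where j: "j < m" "v \<in> L j"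
    using layer_cover by blast
  have shift: "v + h - y - j \<cdot> s = (v - y - j \<cdot> s) + h"
    by (simp add: algebra_simps)
  have j': "v + h \<in> L j"
    using j(2) unfolding layer_def mem_Collect_eq shift
    by (simp add: add_subgroup_add[OF subgroup_H])
  from assms(1) consider "1 \<le> j \<and> j \<le> m div 2" | "j = 0" "v \<in> E"
    using switch_set_layer[OF j(2,1)] by blast
  then show ?thesis
  proof cases
    case 1
    then show ?thesis
      using switch_set_layer[OF j' j(1)] by simp
  next
    case 2
    then obtain i where i: "0 < i" "i < g" "v = y - i \<cdot> h"
      unfolding exceptional_iff by blast
    then have "v + h = y - (i - 1) \<cdot> h"
      by (cases i) (simp_all add: algebra_simps)
    moreover have "y - (i - 1) \<cdot> h \<in> E \<or> i = 1"
      unfolding exceptional_iff using i by (intro disjCI exI[of _ "i - 1"]) simp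
    moreover have "E \<subseteq> S"
      unfolding switch_set_def by blast
    ultimately show ?thesis
      using assms(2) by auto
  qed
qed

lemma switch_map_inj_on: "inj_on f (- {y})"
proof (rule inj_onI)
  have mixed: False if "v \<in> S" "v' \<notin> S" "v' \<noteq> y" "v + t = v' + s" for v v'
  proof -
    have "v' = v + h"
      using that(4) by (simp add: algebra_simps)
    then show False
      using switch_set_add_h[OF that(1)] that(2,3) by simp
  qed
  fix v v' assume "v \<in> - {y}" "v' \<in> - {y}" "f v = f v'"
  then show "v = v'"
    using mixed[of v v'] mixed[of v' v]
    by (cases "v \<in> S"; cases "v' \<in> S") (auto simp: switch_map_inside switch_map_outside)
qed

lemma switch_map_into_layer_1:
  assumes "f v \<in> L 1"
  shows "v \<in> L 0"
proof -
  obtain j where j: "j < m" "v \<in> L j"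
    using layer_cover by blast
  have "f v \<in> L (Suc j)"
    by (rule switch_map_layer[OF j(2)])
  then have "j = 0"
  proof (cases "Suc j < m")
    case True
    then show ?thesis
      using layer_unique[OF assms \<open>f v \<in> L (Suc j)\<close>] two_le_m by simp
  next
    case False
    with j(1) have "Suc j = m"
      by simp
    with \<open>f v \<in> L (Suc j)\<close> have "f v \<in> L 0"
      using layer_m by simp
    then show ?thesis
      using layer_unique[OF assms] two_le_m by fastforce
  qed
  with j show ?thesis
    by simp
qed

lemma start_not_in_image: "y - (g - 1) \<cdot> h + s \<notin> f ` (- {y})"
proof
  define x where "x = y - (g - 1) \<cdot> h + s"
  assume "x \<in> f ` (- {y})"
  then obtain v where v: "v \<noteq> y" "f v = x"
    by auto
  have "x \<in> L 1"
    unfolding layer_def x_def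
    using add_subgroup_uminus[OF subgroup_H nat_scale_in_multiples] by simp
  then have v_layer: "v \<in> L 0"
    using switch_map_into_layer_1 v(2) by simp
  show False
  proof (cases "v \<in> E")
    case True
    then obtain i where i: "0 < i" "i < g" "v = y - i \<cdot> h"
      unfolding exceptional_iff by blast
    have "y - g \<cdot> h = y - (g - 1) \<cdot> h - h"
      using g_pos by (cases g) (simp_all add: algebra_simps)
    also have "\<dots> = v"
      using v(2) switch_map_layer_0[OF v_layer] True unfolding x_def by (simp add: algebra_simps)
    finally have "(g - i) \<cdot> h = 0"
      using i by (simp add: nat_scale_diff)
    then show False
      using not_in_subgroup_below_rel_order[OF finite_UNIV subgroup_W, of "g - i" h] i subgroup_W
      unfolding class_order_def add_subgroup_def by simp
  next
    case False
    then have "v = y - (g - 1) \<cdot> h"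
      using v(2) switch_map_layer_0[OF v_layer] unfolding x_def by (simp add: algebra_simps)
    moreover have "y - (g - 1) \<cdot> h \<in> E \<or> g = 1"
      unfolding exceptional_iff using g_pos by (intro disjCI exI[of _ "g - 1"]) simp
    ultimately show False
      using False v(1) by auto
  qed
qed

lemma ham_path_exists: "\<exists>p. ham_path s t p \<and> path_arcs p \<subseteq> range (\<lambda>v. (v, f v))"
  using functional_graph_path[OF switch_map_inj_on start_not_in_image reaches_y] ham_path_switch_map
  by blast

end

theorem mainTheorem5:
  fixes a b :: "'a::ab_group_add"
  assumes "finite (UNIV :: 'a set)"
    and "a \<noteq> b"
    and "gen_subgroup {a, b} = UNIV"
    and "a \<noteq> 0" and "b \<noteq> 0"
    and "even (subgroup_index (gen_subgroup {a - b}))"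
  shows "\<exists>p q. ham_path a b p \<and> ham_path a b q \<and> path_arcs p \<inter> path_arcs q = {}"
proof -
  have even: "even (layer_order a b)"
    using assms(6) subgroup_index_eq_layer_order[OF assms(1,3)] by simp
  interpret ab: switch_walk a b 0
    using assms(1,3) even by unfold_locales
  interpret ba: switch_walk b a "0 - class_order a b \<cdot> (b - a)"
    using assms(1,3) even layer_order_swap[OF assms(1)]
    by unfold_locales (simp_all add: insert_commute)
  let ?S = "switch_set a b 0"
  obtain p where p: "ham_path a b p" "path_arcs p \<subseteq> range (\<lambda>v. (v, switch_map ?S a b v))"
    using ab.ham_path_exists by blast
  obtain q where q: "ham_path a b q" "path_arcs q \<subseteq> range (\<lambda>v. (v, switch_map ?S b a v))"
    using ba.ham_path_exists
    unfolding switch_set_swap[OF assms(1) even] ham_path_commute[of b a] by blast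
  from p(2) q(2) have "path_arcs p \<inter> path_arcs q = {}"
    by (rule switch_map_arcs_disjoint[OF assms(2)])
  with p(1) q(1) show ?thesis
    by blast
qed

end
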